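(* Let $\mathcal H$ be a complex Hilbert space and $k\ge 3$. If a nonzero continuous symmetric $k$-linear form $T$ on $\mathcal H$ attains its norm at $(\mathbf{x}_1,\ldots,\mathbf{x}_k)$, where $\mathbf{x}_1,\ldots,\mathbf{x}_k$ are norm one vectors, then $\dim(\operatorname{span}\{\mathbf{x}_1,\ldots,\mathbf{x}_k\})=1$.
   Context: $k$-linear means $\mathbb C$-multilinear. $\|T\|=\sup\{|T(\mathbf{w}_1,\ldots,\mathbf{w}_k)|:\|\mathbf{w}_i\|\le1\}$, and $T$ attains its norm at $(\mathbf{x}_1,\ldots,\mathbf{x}_k)$ if $|T(\mathbf{x}_1,\ldots,\mathbf{x}_k)|=\|T\|$. *)

theory Defs
  imports "HOL-Analysis.Analysis"
begin

class complex_hilbert = banach +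
  fixes scaleC :: "complex \<Rightarrow> 'a \<Rightarrow> 'a"
    and cinner :: "'a \<Rightarrow> 'a \<Rightarrow> complex"
  assumes scaleC_add_right: "scaleC c (x + y) = scaleC c x + scaleC c y"
    and scaleC_add_left: "scaleC (b + c) x = scaleC b x + scaleC c x"
    and scaleC_scaleC: "scaleC b (scaleC c x) = scaleC (b * c) x"
    and scaleC_one: "scaleC 1 x = x"
    and scaleR_scaleC: "scaleR r x = scaleC (complex_of_real r) x"
    and cinner_add_left: "cinner (x + y) z = cinner x z + cinner y z"
    and cinner_scaleC_left: "cinner (scaleC c x) y = cnj c * cinner x y"
    and cinner_commute: "cinner x y = cnj (cinner y x)"
    and norm_cinner: "norm x = sqrt (Re (cinner x x))"

lemma complex_hilbert_vector_space:
  "vector_space (scaleC :: complex \<Rightarrow> 'a::complex_hilbert \<Rightarrow> 'a)"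
  by unfold_locales (simp_all add: scaleC_add_right scaleC_add_left scaleC_scaleC scaleC_one)

abbreviation cspan :: "'a::complex_hilbert set \<Rightarrow> 'a set" where
  "cspan \<equiv> module.span scaleC"

abbreviation cdim :: "'a::complex_hilbert set \<Rightarrow> nat" where
  "cdim \<equiv> vector_space.dim scaleC"

text \<open>A k-linear form is represented as a function on tuples \<open>nat \<Rightarrow> 'a\<close>
that only depends on the entries with index < k.\<close>

definition multilinear_form :: "nat \<Rightarrow> ((nat \<Rightarrow> 'a::complex_hilbert) \<Rightarrow> complex) \<Rightarrow> bool" where
  "multilinear_form k T \<longleftrightarrow>
     (\<forall>w w'. (\<forall>i<k. w i = w' i) \<longrightarrow> T w = T w') \<and>
     (\<forall>i<k. \<forall>w a b x y. T (w(i := scaleC a x + scaleC b y)) = a * T (w(i := x)) + b * T (w(i := y)))"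

definition symmetric_form :: "nat \<Rightarrow> ((nat \<Rightarrow> 'a) \<Rightarrow> complex) \<Rightarrow> bool" where
  "symmetric_form k T \<longleftrightarrow> (\<forall>\<sigma> w. \<sigma> permutes {..<k} \<longrightarrow> T (w \<circ> \<sigma>) = T w)"

definition form_norm :: "nat \<Rightarrow> ((nat \<Rightarrow> 'a::real_normed_vector) \<Rightarrow> complex) \<Rightarrow> real" where
  "form_norm k T = Sup {cmod (T w) | w. \<forall>i<k. norm (w i) \<le> 1}"

definition attains_norm_at :: "nat \<Rightarrow> ((nat \<Rightarrow> 'a::real_normed_vector) \<Rightarrow> complex) \<Rightarrow> (nat \<Rightarrow> 'a) \<Rightarrow> bool" where
  "attains_norm_at k T x \<longleftrightarrow> (\<forall>i<k. norm (x i) \<le> 1) \<and> cmod (T x) = form_norm k T"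

end

theory Submission
  imports Defs
begin

text \<open>
  Let \<open>w\<close> be a tuple of unit vectors at which \<open>T\<close> attains its norm. Each slot functional
  \<open>u \<mapsto> T (w(i := u))\<close> then attains its norm at \<open>w i\<close>, which in a Hilbert space forces
  \<open>T (w(i := u)) = T w * \<langle>w i, u\<rangle>\<close>. Using this and symmetry, replacing both \<open>w i\<close> and
  \<open>w j\<close> by the normalisation of \<open>w i + t w j\<close> (\<open>|t| = 1\<close>) yields another norm-attaining
  tuple, with value \<open>t T w\<close>. Merging twice and reading off the first-order condition in a
  third slot (here \<open>k \<ge> 3\<close> is used) shows that when two slots of a norm-attaining tuple
  coincide, every other slot is parallel to them. For \<open>t = \<plusminus>1\<close> this makes a third vector
  \<open>w l\<close> parallel to both \<open>w i + w j\<close> and \<open>w i - w j\<close>, so \<open>w j\<close> is parallel to \<open>w i\<close>.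
\<close>

interpretation cvs: vector_space "scaleC :: complex \<Rightarrow> 'a::complex_hilbert \<Rightarrow> 'a"
  by (rule complex_hilbert_vector_space)

lemma cinner_add_right: "cinner x (y + z) = cinner x y + cinner x (z::'a::complex_hilbert)"
  by (metis cinner_add_left cinner_commute complex_cnj_add)

lemma cinner_scaleC_right: "cinner x (scaleC c y) = c * cinner x (y::'a::complex_hilbert)"
  by (metis cinner_commute cinner_scaleC_left complex_cnj_cnj complex_cnj_mult)

lemma cinner_diff_left: "cinner (x - y) z = cinner x z - cinner y (z::'a::complex_hilbert)"
  by (metis add_diff_cancel cinner_add_left diff_add_cancel)

lemma cinner_diff_right: "cinner x (y - z) = cinner x y - cinner x (z::'a::complex_hilbert)"
  by (metis add_diff_cancel cinner_add_right diff_add_cancel)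

lemma cinner_self: "cinner x x = of_real ((norm (x::'a::complex_hilbert))\<^sup>2)"
proof -
  have "Im (cinner x x) = 0"
    using cinner_commute[of x x] by (metis Reals_cnj_iff complex_is_Real_iff)
  moreover have "Re (cinner x x) \<ge> 0"
    using norm_cinner[of x] norm_ge_zero[of x] by simp
  ultimately show ?thesis
    using norm_cinner[of x] by (simp add: complex_eq_iff)
qed

lemma norm_scaleC: "norm (scaleC c x) = cmod c * norm (x::'a::complex_hilbert)"
proof -
  have "of_real ((norm (scaleC c x))\<^sup>2) = cinner (scaleC c x) (scaleC c x)"
    by (simp only: cinner_self)
  also have "\<dots> = cnj c * c * cinner x x"
    by (simp add: cinner_scaleC_left cinner_scaleC_right)
  also have "\<dots> = of_real ((cmod c * norm x)\<^sup>2)"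
    by (simp add: cinner_self[of x] power_mult_distrib mult.commute flip: complex_norm_square)
  finally have "(norm (scaleC c x))\<^sup>2 = (cmod c * norm x)\<^sup>2"
    by (simp only: of_real_eq_iff)
  then show ?thesis
    by (simp add: power2_eq_iff_nonneg)
qed

lemma norm_add_square_if_orthogonal:
  fixes x y :: "'a::complex_hilbert"
  assumes "cinner x y = 0"
  shows "(norm (x + y))\<^sup>2 = (norm x)\<^sup>2 + (norm y)\<^sup>2"
proof -
  have "cinner (x + y) (x + y) = cinner x x + cinner y y"
    using assms cinner_commute[of y x] by (simp add: cinner_add_left cinner_add_right)
  then have "of_real ((norm (x + y))\<^sup>2) = (of_real ((norm x)\<^sup>2 + (norm y)\<^sup>2) :: complex)"
    by (simp only: cinner_self of_real_add)
  then show ?thesis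
    by (simp only: of_real_eq_iff)
qed

lemma cnj_mult_self_unit: "cmod t = 1 \<Longrightarrow> cnj t * t = 1"
  by (metis complex_norm_square mult.commute of_real_1 power_one)

lemma norm_add_scaleC_square:
  fixes a c :: "'a::complex_hilbert"
  assumes "norm a = 1" "norm c = 1" "cmod t = 1"
  shows "of_real ((norm (a + scaleC t c))\<^sup>2) = 2 + t * cinner a c + cnj t * cinner c a"
proof -
  have "of_real ((norm (a + scaleC t c))\<^sup>2) = cinner (a + scaleC t c) (a + scaleC t c)"
    by (simp only: cinner_self)
  also have "\<dots> = cinner a a + t * cinner a c + cnj t * cinner c a + cnj t * t * cinner c c"
    by (simp add: cinner_add_left cinner_add_right cinner_scaleC_left cinner_scaleC_right
        algebra_simps)
  finally show ?thesis
    using assms cnj_mult_self_unit[OF assms(3)] by (simp add: cinner_self)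
qed

lemma eq_scaleC_cinner_if_cinner_factors:
  fixes a c :: "'a::complex_hilbert"
  assumes "norm a = 1" and factors: "\<And>u. cinner c u = cinner c a * cinner a u"
  shows "c = scaleC (cinner a c) a"
proof -
  define d where "d = c - scaleC (cinner a c) a"
  have "cinner a d = 0"
    using assms(1) by (simp add: d_def cinner_diff_right cinner_scaleC_right cinner_self)
  moreover from this have "cinner c d = 0"
    using factors[of d] by simp
  ultimately have "cinner d d = 0"
    by (simp add: d_def cinner_diff_left cinner_scaleC_left)
  then show ?thesis
    by (simp add: cinner_self d_def)
qed

lemma add_scaleC_neq_zero_if_not_parallel:
  fixes a b :: "'a::complex_hilbert"
  assumes "\<nexists>c. b = scaleC c a" and "t \<noteq> 0"
  shows "a + scaleC t b \<noteq> 0"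
proof
  assume "a + scaleC t b = 0"
  then have "scaleC t b = - a"
    by (simp add: add_eq_0_iff)
  then have "scaleC (inverse t) (scaleC t b) = scaleC (- inverse t) a"
    by simp
  then have "b = scaleC (- inverse t) a"
    using \<open>t \<noteq> 0\<close> by simp
  with assms(1) show False by blast
qed

lemma parallel_if_parallel_to_sum_and_diff:
  fixes a b c :: "'a::complex_hilbert"
  assumes "a \<noteq> 0" "c \<noteq> 0" "c = scaleC \<alpha> (a + b)" "c = scaleC \<beta> (a - b)"
  shows "\<exists>\<gamma>. b = scaleC \<gamma> a"
proof -
  have "scaleC \<alpha> a + scaleC \<alpha> b = scaleC \<beta> a - scaleC \<beta> b"
    using assms(3,4) by (simp add: cvs.scale_right_distrib cvs.scale_right_diff_distrib)
  then have comb: "scaleC (\<alpha> + \<beta>) b = scaleC (\<beta> - \<alpha>) a"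
    by (simp add: cvs.scale_left_distrib cvs.scale_left_diff_distrib eq_diff_eq diff_eq_eq
        add.commute add.left_commute)
  show ?thesis
  proof (cases "\<alpha> + \<beta> = 0")
    case False
    then have "b = scaleC ((\<beta> - \<alpha>) / (\<alpha> + \<beta>)) a"
      using comb by (metis cvs.scale_one cvs.scale_scale divide_inverse left_inverse mult.commute)
    then show ?thesis by blast
  next
    case True
    then have "scaleC (\<beta> - \<alpha>) a = 0"
      using comb by simp
    then have "\<alpha> = 0"
      using True assms(1) by simp
    then show ?thesis
      using assms(2,3) by simp
  qed
qed

lemma bounded_functional_attaining_vanishes_on_orthogonal:
  fixes f :: "'a::complex_hilbert \<Rightarrow> complex"
  assumes linear: "\<And>a b u v. f (scaleC a u + scaleC b v) = a * f u + b * f v"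
    and bounded: "\<And>u. cmod (f u) \<le> M * norm u"
    and unit: "norm x = 1" and attains: "cmod (f x) = M" and orthogonal: "cinner x v = 0"
  shows "f v = 0"
proof (rule ccontr)
  assume "f v \<noteq> 0"
  define \<beta> where "\<beta> = (cmod (f v))\<^sup>2"
  define N where "N = M\<^sup>2 * (norm v)\<^sup>2"
  define s where "s = 1 / (N + 1)"
  define y where "y = x + scaleC (of_real s * f x * cnj (f v)) v"
  have "\<beta> > 0" "N \<ge> 0"
    using \<open>f v \<noteq> 0\<close> by (simp_all add: \<beta>_def N_def)
  then have "s > 0" "s * N < 1"
    by (simp_all add: s_def field_simps)
  have "M > 0"
    using bounded[of v] \<open>f v \<noteq> 0\<close> norm_ge_zero[of v]
    by (smt (verit) mult_nonpos_nonneg zero_less_norm_iff)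
  text \<open>Moving from \<open>x\<close> orthogonally to \<open>x\<close> increases \<open>|f|\<close> to first order,
    but the norm only to second order.\<close>
  have "cnj (f v) * f v = of_real \<beta>"
    by (metis \<beta>_def complex_norm_square mult.commute)
  then have "f y = f x * of_real (1 + s * \<beta>)"
    using linear[of 1 x _ v] by (simp add: y_def algebra_simps)
  then have "cmod (f y) = M * (1 + s * \<beta>)"
    using attains \<open>s > 0\<close> \<open>\<beta> > 0\<close> by (simp only: norm_mult norm_of_real) simp
  then have "M * (1 + s * \<beta>) \<le> M * norm y"
    using bounded[of y] by simp
  then have "(1 + s * \<beta>)\<^sup>2 \<le> (norm y)\<^sup>2"
    using \<open>M > 0\<close> \<open>s > 0\<close> \<open>\<beta> > 0\<close> by (intro power_mono) auto
  also have "(norm y)\<^sup>2 = 1 + s\<^sup>2 * \<beta> * N"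
    using norm_add_square_if_orthogonal[of x "scaleC (of_real s * f x * cnj (f v)) v"]
      orthogonal unit attains \<open>s > 0\<close>
    by (simp add: y_def cinner_scaleC_right norm_scaleC norm_mult \<beta>_def N_def power_mult_distrib)
  finally have "s * \<beta> * (2 + s * \<beta>) \<le> s * \<beta> * (s * N)"
    by (simp add: power2_eq_square algebra_simps)
  then have "2 + s * \<beta> \<le> s * N"
    using \<open>s > 0\<close> \<open>\<beta> > 0\<close> by (metis mult_le_cancel_left_pos mult_pos_pos)
  then show False
    using \<open>s * N < 1\<close> \<open>s > 0\<close> \<open>\<beta> > 0\<close> by (smt (verit) mult_pos_pos)
qed

lemma bounded_functional_attaining_eq_cinner:
  fixes f :: "'a::complex_hilbert \<Rightarrow> complex"
  assumes linear: "\<And>a b u v. f (scaleC a u + scaleC b v) = a * f u + b * f v"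
    and bounded: "\<And>u. cmod (f u) \<le> M * norm u"
    and unit: "norm x = 1" and attains: "cmod (f x) = M"
  shows "f u = f x * cinner x u"
proof -
  define v where "v = u - scaleC (cinner x u) x"
  have "cinner x v = 0"
    using unit by (simp add: v_def cinner_diff_right cinner_scaleC_right cinner_self)
  then have "f v = 0"
    by (rule bounded_functional_attaining_vanishes_on_orthogonal[OF linear bounded unit attains])
  moreover have "f u = cinner x u * f x + f v"
    using linear[of "cinner x u" x 1 v] by (simp add: v_def)
  ultimately show ?thesis
    by (simp add: mult.commute)
qed

locale complex_multilinear =
  fixes k :: nat and T :: "(nat \<Rightarrow> 'a::complex_hilbert) \<Rightarrow> complex"
  assumes multilinear: "multilinear_form k T"
begin

lemma T_cong: "(\<And>i. i < k \<Longrightarrow> w i = w' i) \<Longrightarrow> T w = T w'"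
  using multilinear unfolding multilinear_form_def by blast

lemma T_slot_linear:
  "i < k \<Longrightarrow> T (w(i := scaleC a x + scaleC b y)) = a * T (w(i := x)) + b * T (w(i := y))"
  using multilinear unfolding multilinear_form_def by blast

lemma T_slot_scaleC: "i < k \<Longrightarrow> T (w(i := scaleC a x)) = a * T (w(i := x))"
  using T_slot_linear[of i w a x 0 x] by simp

lemma T_slot_scaleR: "i < k \<Longrightarrow> T (w(i := scaleR r x)) = of_real r * T (w(i := x))"
  by (simp add: scaleR_scaleC T_slot_scaleC)

lemma T_slot_zero: "i < k \<Longrightarrow> T (w(i := 0)) = 0"
  using T_slot_scaleC[of i w 0 0] by simp

lemma T_scaleR: "T (\<lambda>j. scaleR r (w j)) = of_real (r ^ k) * T w"
proof -
  have partial: "T (\<lambda>j. if j < m then scaleR r (w j) else w j) = of_real (r ^ m) * T w"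
    if "m \<le> k" for m
    using that
  proof (induction m)
    case 0
    then show ?case by simp
  next
    case (Suc m)
    let ?w = "\<lambda>j. if j < m then scaleR r (w j) else w j"
    have "?w(m := w m) = ?w"
      and "(\<lambda>j. if j < Suc m then scaleR r (w j) else w j) = ?w(m := scaleR r (w m))"
      by (auto simp: fun_eq_iff)
    then have "T (\<lambda>j. if j < Suc m then scaleR r (w j) else w j) = of_real r * T ?w"
      using T_slot_scaleR[of m ?w r "w m"] Suc.prems by (metis Suc_le_lessD)
    with Suc show ?case
      by simp
  qed
  have "T (\<lambda>j. scaleR r (w j)) = T (\<lambda>j. if j < k then scaleR r (w j) else w j)"
    by (rule T_cong) simp
  also have "\<dots> = of_real (r ^ k) * T w"
    by (rule partial) simp
  finally show ?thesis .
qed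

lemma T_two_slots_scaleR:
  assumes "i < k" "j < k" "i \<noteq> j"
  shows "T (w(i := scaleR r p, j := scaleR r q)) = of_real (r\<^sup>2) * T (w(i := p, j := q))"
proof -
  have "T (w(i := scaleR r p, j := scaleR r q)) = of_real r * T ((w(j := q))(i := scaleR r p))"
    using T_slot_scaleR[OF assms(2), of "w(i := scaleR r p)"] assms(3) by (simp add: fun_upd_twist)
  also have "\<dots> = of_real (r\<^sup>2) * T (w(i := p, j := q))"
    using T_slot_scaleR[OF assms(1), of "w(j := q)"] assms(3) by (simp add: fun_upd_twist power2_eq_square)
  finally show ?thesis .
qed

lemma T_two_slots_add_scaleC:
  assumes "i < k" "j < k" "i \<noteq> j"
  shows "T (w(i := p + scaleC t q, j := p + scaleC t q)) =
    T (w(i := p, j := p)) + t * T (w(i := p, j := q)) + t * T (w(i := q, j := p))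
      + t\<^sup>2 * T (w(i := q, j := q))"
proof -
  have slot_j: "T (w'(j := p + scaleC t q)) = T (w'(j := p)) + t * T (w'(j := q))" for w'
    using T_slot_linear[OF assms(2), of w' 1 p t q] by simp
  have slot_i: "T ((w(j := r))(i := p + scaleC t q))
      = T ((w(j := r))(i := p)) + t * T ((w(j := r))(i := q))" for r
    using T_slot_linear[OF assms(1), of "w(j := r)" 1 p t q] by simp
  have twist: "(w(j := b))(i := a) = w(i := a, j := b)" for a b
    using assms(3) by (simp add: fun_upd_twist)
  show ?thesis
    using slot_i[unfolded twist] slot_j by (simp add: algebra_simps power2_eq_square)
qed

end

locale continuous_complex_multilinear = complex_multilinear +
  assumes continuous: "continuous_on UNIV T"
begin

lemma T_tendsto_componentwise:
  assumes "\<And>i. (\<lambda>n. V n i) \<longlonglongrightarrow> v i"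
  shows "(\<lambda>n. T (V n)) \<longlonglongrightarrow> T v"
proof -
  have "limitin (product_topology (\<lambda>i. euclidean) UNIV) V v sequentially"
    unfolding limitin_componentwise using assms by simp
  then have "V \<longlonglongrightarrow> v"
    by (simp add: euclidean_product_topology)
  then show ?thesis
    using continuous by (metis continuous_on_tendsto_compose UNIV_I eventually_sequentially)
qed

lemma bdd_above_unit_ball: "bdd_above {cmod (T w) | w. \<forall>i<k. norm (w i) \<le> 1}"
proof (rule ccontr)
  define B where "B = cmod (T (\<lambda>_. 0)) + 1"
  assume unbounded: "\<not> ?thesis"
  have "\<exists>w. (\<forall>i<k. norm (w i) \<le> 1) \<and> cmod (T w) > real (Suc n) ^ k * B" for n
  proof -
    have "\<not> (\<forall>x \<in> {cmod (T w) | w. \<forall>i<k. norm (w i) \<le> 1}. x \<le> real (Suc n) ^ k * B)"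
      using unbounded unfolding bdd_above_def by blast
    then show ?thesis
      by (auto simp: not_le)
  qed
  then obtain W where W_unit: "\<And>n i. i < k \<Longrightarrow> norm (W n i) \<le> 1"
    and W_large: "\<And>n. cmod (T (W n)) > real (Suc n) ^ k * B"
    by metis
  define V where "V n i = (if i < k then scaleR (inverse (real (Suc n))) (W n i) else 0)" for n i
  have V_large: "cmod (T (V n)) > B" for n
  proof -
    have "T (V n) = T (\<lambda>i. scaleR (inverse (real (Suc n))) (W n i))"
      by (rule T_cong) (simp add: V_def)
    then show ?thesis
      using W_large[of n] unfolding T_scaleR
      by (simp only: norm_mult norm_of_real) (simp add: power_inverse field_simps)
  qed
  have "(\<lambda>n. V n i) \<longlonglongrightarrow> 0" for i
  proof (cases "i < k")
    case True
    then have "norm (V n i) \<le> inverse (real (Suc n))" for n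
      using W_unit[of i n] by (simp add: V_def mult_le_cancel_left1)
    then show ?thesis
      by (intro Lim_null_comparison[OF _ LIMSEQ_inverse_real_of_nat]) auto
  qed (simp add: V_def)
  then have "(\<lambda>n. T (V n)) \<longlonglongrightarrow> T (\<lambda>_. 0)"
    by (rule T_tendsto_componentwise)
  then have "eventually (\<lambda>n. cmod (T (V n)) < B) sequentially"
    using order_tendstoD(2)[OF tendsto_norm, of _ "T (\<lambda>_. 0)" _ B] by (simp add: B_def)
  then obtain N where "\<forall>n\<ge>N. cmod (T (V n)) < B"
    unfolding eventually_sequentially by blast
  with V_large[of N] show False
    by auto
qed

lemma norm_le_form_norm: "(\<And>i. i < k \<Longrightarrow> norm (w i) \<le> 1) \<Longrightarrow> cmod (T w) \<le> form_norm k T"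
  unfolding form_norm_def by (rule cSup_upper) (use bdd_above_unit_ball in auto)

lemma form_norm_pos:
  assumes "T \<noteq> (\<lambda>_. 0)"
  shows "0 < form_norm k T"
proof -
  obtain w where "T w \<noteq> 0"
    using assms by auto
  define c where "c = 1 + (\<Sum>i<k. norm (w i))"
  have "c > 0"
    unfolding c_def by (smt (verit) sum_nonneg norm_ge_zero)
  have "T (\<lambda>i. scaleR (1 / c) (w i)) \<noteq> 0"
    using \<open>T w \<noteq> 0\<close> \<open>c > 0\<close> by (simp add: T_scaleR)
  moreover have "norm (scaleR (1 / c) (w i)) \<le> 1" if "i < k" for i
  proof -
    have "norm (w i) \<le> c"
      using that unfolding c_def by (smt (verit) finite_lessThan lessThan_iff member_le_sum norm_ge_zero)
    then show ?thesis
      using \<open>c > 0\<close> by (simp add: divide_le_eq)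
  qed
  then have "cmod (T (\<lambda>i. scaleR (1 / c) (w i))) \<le> form_norm k T"
    by (intro norm_le_form_norm)
  ultimately show ?thesis
    by (smt (verit) zero_less_norm_iff)
qed

lemma norm_slot_le:
  assumes "\<forall>m<k. norm (w m) \<le> 1" and "i < k"
  shows "cmod (T (w(i := u))) \<le> form_norm k T * norm u"
proof (cases "u = 0")
  case True
  then show ?thesis
    using T_slot_zero[OF assms(2)] by simp
next
  case False
  have "cmod (T (w(i := sgn u))) \<le> form_norm k T"
    using assms False by (intro norm_le_form_norm) (simp add: norm_sgn)
  moreover have "T (w(i := sgn u)) = of_real (inverse (norm u)) * T (w(i := u))"
    unfolding sgn_div_norm by (rule T_slot_scaleR[OF assms(2)])
  then have "cmod (T (w(i := sgn u))) = cmod (T (w(i := u))) / norm u"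
    by (simp only: norm_mult norm_of_real) (simp add: divide_inverse mult.commute)
  ultimately show ?thesis
    using False by (simp add: divide_le_eq mult.commute)
qed

lemma slot_eq_cinner:
  assumes unit: "\<forall>m<k. norm (w m) = 1" and attains: "attains_norm_at k T w" and "i < k"
  shows "T (w(i := u)) = T w * cinner (w i) u"
proof -
  have "T (w(i := u)) = T (w(i := w i)) * cinner (w i) u"
  proof (rule bounded_functional_attaining_eq_cinner)
    show "T (w(i := scaleC a u + scaleC b v)) = a * T (w(i := u)) + b * T (w(i := v))" for a b u v
      by (rule T_slot_linear[OF \<open>i < k\<close>])
    show "cmod (T (w(i := u))) \<le> form_norm k T * norm u" for u
      using unit \<open>i < k\<close> by (intro norm_slot_le) auto
    show "norm (w i) = 1"
      using unit \<open>i < k\<close> by simp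
    show "cmod (T (w(i := w i))) = form_norm k T"
      using attains by (simp add: attains_norm_at_def)
  qed
  then show ?thesis
    by simp
qed

end

locale symmetric_continuous_complex_multilinear = continuous_complex_multilinear +
  assumes symmetric: "symmetric_form k T"
begin

lemma T_swap:
  assumes "i < k" "j < k" "i \<noteq> j"
  shows "T (w(i := p, j := q)) = T (w(i := q, j := p))"
proof -
  have "Transposition.transpose i j permutes {..<k}"
    using assms by (intro permutes_swap_id) auto
  then have "T (w(i := p, j := q) \<circ> Transposition.transpose i j) = T (w(i := p, j := q))"
    using symmetric unfolding symmetric_form_def by blast
  moreover have "w(i := p, j := q) \<circ> Transposition.transpose i j = w(i := q, j := p)"
    using assms by (auto simp: fun_eq_iff Transposition.transpose_def)
  ultimately show ?thesis
    by simp
qed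

lemma attains_norm_at_merge_slots:
  assumes unit: "\<forall>m<k. norm (w m) = 1" and attains: "attains_norm_at k T w"
    and ij: "i < k" "j < k" "i \<noteq> j" and t: "cmod t = 1" and nonzero: "w i + scaleC t (w j) \<noteq> 0"
  defines "w' \<equiv> w(i := sgn (w i + scaleC t (w j)), j := sgn (w i + scaleC t (w j)))"
  shows "\<forall>m<k. norm (w' m) = 1" and "T w' = t * T w" and "attains_norm_at k T w'"
proof -
  define a where "a = w i"
  define b where "b = w j"
  define v where "v = a + scaleC t b"
  have slot: "T (w(m := u)) = T w * cinner (w m) u" if "m < k" for m u
    using slot_eq_cinner[OF unit attains that] .
  have "T (w(i := v, j := v)) = T w * cinner b a + t * T w + t * T w + t\<^sup>2 * (T w * cinner a b)"
  proof -
    have "T (w(i := a, j := a)) = T w * cinner b a"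
      using slot[OF ij(2)] by (simp add: a_def b_def)
    moreover have "T (w(i := b, j := a)) = T w"
      using T_swap[OF ij, of w b a] by (simp add: a_def b_def)
    moreover have "T (w(i := b, j := b)) = T w * cinner a b"
    proof -
      have "w(i := b, j := b) = w(i := b)"
        using ij(3) by (auto simp: b_def fun_eq_iff)
      then show ?thesis
        using slot[OF ij(1), of b] by (simp add: a_def)
    qed
    ultimately show ?thesis
      unfolding v_def T_two_slots_add_scaleC[OF ij] by (simp add: a_def b_def)
  qed
  also have "\<dots> = t * of_real ((norm v)\<^sup>2) * T w"
    using norm_add_scaleC_square[of a b t] unit ij t cnj_mult_self_unit[OF t]
    by (simp add: v_def a_def b_def algebra_simps power2_eq_square)
  finally have merged: "T (w(i := v, j := v)) = t * of_real ((norm v)\<^sup>2) * T w" .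
  have "v \<noteq> 0"
    using nonzero by (simp add: v_def a_def b_def)
  have "T w' = of_real ((inverse (norm v))\<^sup>2) * T (w(i := v, j := v))"
    unfolding w'_def sgn_div_norm by (simp add: v_def a_def b_def T_two_slots_scaleR[OF ij])
  also have "\<dots> = t * T w"
    using \<open>v \<noteq> 0\<close> by (simp add: merged power_inverse field_simps)
  finally show "T w' = t * T w" .
  show unit': "\<forall>m<k. norm (w' m) = 1"
    using unit nonzero by (simp add: w'_def norm_sgn)
  show "attains_norm_at k T w'"
    using unit' attains \<open>T w' = t * T w\<close> t by (simp add: attains_norm_at_def norm_mult)
qed

lemma T_merge_expansion_at_equal_slots:
  assumes unit: "\<forall>m<k. norm (w m) = 1" and attains: "attains_norm_at k T w"
    and idx: "i < k" "j < k" "l < k" "i \<noteq> j" "i \<noteq> l" "j \<noteq> l" and eq: "w j = w i"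
  shows "T (w(j := u, i := w i + scaleC t (w l), l := w i + scaleC t (w l)))
    = T w * cinner (w l) u + 2 * t * (T w * cinner (w i) u) + t\<^sup>2 * T (w(j := u, i := w l))"
proof -
  define a where "a = w i"
  define c where "c = w l"
  define W where "W = w(j := u)"
  have il: "i < k" "l < k" "i \<noteq> l"
    using idx by auto
  have slot: "T (w(m := x)) = T w * cinner (w m) x" if "m < k" for m x
    using slot_eq_cinner[OF unit attains that] .
  have "T (W(i := a, l := a)) = T w * cinner c u"
  proof -
    have "W(i := a, l := a) = w(j := u, l := w j)"
      using idx by (auto simp: W_def a_def eq fun_eq_iff)
    then have "T (W(i := a, l := a)) = T (w(j := w j, l := u))"
      using T_swap[of j l w u "w j"] idx by simp
    then show ?thesis
      using slot[OF idx(3)] by (simp add: c_def)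
  qed
  moreover have "T (W(i := a, l := c)) = T w * cinner a u"
  proof -
    have "W(i := a, l := c) = w(j := u)"
      using idx by (auto simp: W_def a_def c_def fun_eq_iff)
    then show ?thesis
      using slot[OF idx(2), of u] by (simp add: a_def eq)
  qed
  moreover have "T (W(i := c, l := a)) = T w * cinner a u"
    using T_swap[OF il, of W c a] calculation(2) by simp
  moreover have "W(i := c, l := c) = w(j := u, i := c)"
    using idx by (auto simp: W_def c_def fun_eq_iff)
  ultimately show ?thesis
    unfolding a_def[symmetric] c_def[symmetric] W_def[symmetric] T_two_slots_add_scaleC[OF il]
    by (simp add: algebra_simps)
qed

lemma equal_slots_expansion:
  assumes unit: "\<forall>m<k. norm (w m) = 1" and attains: "attains_norm_at k T w"
    and idx: "i < k" "j < k" "l < k" "i \<noteq> j" "i \<noteq> l" "j \<noteq> l"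
    and eq: "w j = w i" and t: "cmod t = 1" and nonzero: "w i + scaleC t (w l) \<noteq> 0"
  shows "T w * cinner (w l) u + t\<^sup>2 * T (w(j := u, i := w l))
    = (t\<^sup>2 * cinner (w i) (w l) + cinner (w l) (w i)) * T w * cinner (w i) u"
proof -
  define a where "a = w i"
  define c where "c = w l"
  define v where "v = a + scaleC t c"
  define W where "W = w(j := u)"
  have il: "i < k" "l < k" "i \<noteq> l"
    using idx by auto
  note merge = attains_norm_at_merge_slots[OF unit attains il t nonzero]
  text \<open>Merging slots \<open>i\<close> and \<open>l\<close> leaves \<open>a\<close> in slot \<open>j\<close>; the first-order condition in
    slot \<open>j\<close> of the merged tuple is a second-order condition for \<open>w\<close>.\<close>
  have "T (W(i := sgn v, l := sgn v)) = t * T w * cinner a u"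
    using slot_eq_cinner[OF merge(1,3) idx(2), of u] merge(2) idx eq
    by (simp add: W_def v_def a_def c_def fun_upd_twist)
  moreover have "T (W(i := sgn v, l := sgn v))
      = of_real ((inverse (norm v))\<^sup>2) * T (W(i := v, l := v))"
    unfolding sgn_div_norm by (rule T_two_slots_scaleR[OF il])
  ultimately have "T (W(i := v, l := v)) = of_real ((norm v)\<^sup>2) * t * (T w * cinner a u)"
    using nonzero by (simp add: v_def a_def c_def power_inverse field_simps)
  moreover have "T (W(i := v, l := v)) = T w * cinner c u + 2 * t * (T w * cinner a u)
      + t\<^sup>2 * T (w(j := u, i := c))"
    using T_merge_expansion_at_equal_slots[OF unit attains idx eq]
    by (simp add: W_def v_def a_def c_def)
  moreover have "of_real ((norm v)\<^sup>2) * t = 2 * t + t\<^sup>2 * cinner a c + cinner c a"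
  proof -
    have "of_real ((norm v)\<^sup>2) = 2 + t * cinner a c + cnj t * cinner c a"
      unfolding v_def using unit idx t by (intro norm_add_scaleC_square) (auto simp: a_def c_def)
    then have "of_real ((norm v)\<^sup>2) * t = 2 * t + t\<^sup>2 * cinner a c + (cnj t * t) * cinner c a"
      by (simp add: algebra_simps power2_eq_square)
    then show ?thesis
      using cnj_mult_self_unit[OF t] by simp
  qed
  ultimately have "T w * cinner c u + 2 * t * (T w * cinner a u) + t\<^sup>2 * T (w(j := u, i := c))
      = (2 * t + t\<^sup>2 * cinner a c + cinner c a) * (T w * cinner a u)"
    by metis
  then show ?thesis
    unfolding a_def c_def by algebra
qed

lemma parallel_if_equal_slots:
  assumes unit: "\<forall>m<k. norm (w m) = 1" and attains: "attains_norm_at k T w" and "T w \<noteq> 0"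
    and idx: "i < k" "j < k" "l < k" "i \<noteq> j" "i \<noteq> l" "j \<noteq> l"
    and eq: "w j = w i"
  shows "\<exists>c. w l = scaleC c (w i)"
proof (rule ccontr)
  assume not_parallel: "\<nexists>c. w l = scaleC c (w i)"
  have nonzero: "w i + scaleC t (w l) \<noteq> 0" if "cmod t = 1" for t
    using add_scaleC_neq_zero_if_not_parallel[OF not_parallel, of t] that by force
  note expansion = equal_slots_expansion[OF unit attains idx eq _ nonzero]
  have factors: "cinner (w l) u = cinner (w l) (w i) * cinner (w i) u" for u
  proof -
    text \<open>Taking \<open>t = 1\<close> and \<open>t = \<i>\<close> eliminates the unknown term \<open>T (w(j := u, i := w l))\<close>.\<close>
    have "T w * cinner (w l) u + T (w(j := u, i := w l))
        = (cinner (w i) (w l) + cinner (w l) (w i)) * T w * cinner (w i) u"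
      using expansion[of 1 u] by simp
    moreover have "T w * cinner (w l) u - T (w(j := u, i := w l))
        = (cinner (w l) (w i) - cinner (w i) (w l)) * T w * cinner (w i) u"
      using expansion[of \<i> u] by (simp add: power2_eq_square)
    ultimately have "T w * cinner (w l) u = T w * (cinner (w l) (w i) * cinner (w i) u)"
      by algebra
    then show ?thesis
      using \<open>T w \<noteq> 0\<close> by simp
  qed
  have "norm (w i) = 1"
    using unit idx by simp
  then have "w l = scaleC (cinner (w i) (w l)) (w i)"
    using factors by (rule eq_scaleC_cinner_if_cinner_factors)
  with not_parallel show False
    by blast
qed

lemma parallel_to_merged_slots:
  assumes unit: "\<forall>m<k. norm (w m) = 1" and attains: "attains_norm_at k T w" and "T w \<noteq> 0"
    and idx: "i < k" "j < k" "l < k" "i \<noteq> j" "i \<noteq> l" "j \<noteq> l"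
    and t: "cmod t = 1" and nonzero: "w i + scaleC t (w j) \<noteq> 0"
  shows "\<exists>\<alpha>. w l = scaleC \<alpha> (w i + scaleC t (w j))"
proof -
  define v where "v = w i + scaleC t (w j)"
  define w' where "w' = w(i := sgn v, j := sgn v)"
  note merge = attains_norm_at_merge_slots[OF unit attains idx(1,2,4) t nonzero,
      folded v_def, folded w'_def]
  have "T w' \<noteq> 0"
    using merge(2) \<open>T w \<noteq> 0\<close> t by auto
  moreover have "w' j = w' i"
    by (simp add: w'_def)
  ultimately obtain c where "w' l = scaleC c (w' i)"
    using parallel_if_equal_slots[OF merge(1,3) _ idx(1-3)] idx(4-6) by blast
  then have "w l = scaleC (c * of_real (inverse (norm v))) v"
    using idx by (simp add: w'_def sgn_div_norm scaleR_scaleC)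
  then show ?thesis
    unfolding v_def by blast
qed

lemma parallel_slots:
  assumes "3 \<le> k" and unit: "\<forall>m<k. norm (w m) = 1" and attains: "attains_norm_at k T w"
    and "T w \<noteq> 0" and "i < k" "j < k"
  shows "\<exists>c. w j = scaleC c (w i)"
proof (rule ccontr)
  assume not_parallel: "\<nexists>c. w j = scaleC c (w i)"
  then have "i \<noteq> j"
    by (metis cvs.scale_one)
  obtain l where l: "l < k" "l \<noteq> i" "l \<noteq> j"
  proof -
    define l :: nat where "l = (if 0 \<notin> {i, j} then 0 else if 1 \<notin> {i, j} then 1 else 2)"
    have "l < k" "l \<noteq> i" "l \<noteq> j"
      using \<open>3 \<le> k\<close> by (auto simp: l_def)
    then show ?thesis
      by (rule that)
  qed
  have "\<exists>\<alpha>. w l = scaleC \<alpha> (w i + scaleC t (w j))" if "cmod t = 1" for t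
    using parallel_to_merged_slots[OF unit attains \<open>T w \<noteq> 0\<close> \<open>i < k\<close> \<open>j < k\<close> l(1) \<open>i \<noteq> j\<close>
        l(2)[symmetric] l(3)[symmetric] that]
      add_scaleC_neq_zero_if_not_parallel[OF not_parallel, of t] that
    by force
  from this[of 1] this[of "-1"] obtain \<alpha> \<beta>
    where "w l = scaleC \<alpha> (w i + w j)" and "w l = scaleC \<beta> (w i - w j)"
    by auto
  moreover have "w i \<noteq> 0" "w l \<noteq> 0"
    using unit \<open>i < k\<close> l(1) by auto
  ultimately show False
    using parallel_if_parallel_to_sum_and_diff not_parallel by blast
qed

end

theorem proposition3p1:
  fixes T :: "(nat \<Rightarrow> 'a::complex_hilbert) \<Rightarrow> complex"
    and x :: "nat \<Rightarrow> 'a"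
    and k :: nat
  assumes "k \<ge> 3"
    and "multilinear_form k T"
    and "symmetric_form k T"
    and "continuous_on UNIV T"
    and "T \<noteq> (\<lambda>_. 0)"
    and "\<forall>i<k. norm (x i) = 1"
    and "attains_norm_at k T x"
  shows "cdim (x ` {..<k}) = 1"
proof -
  interpret symmetric_continuous_complex_multilinear k T
    by unfold_locales (rule assms)+
  have "0 < k"
    using assms(1) by simp
  have "T x \<noteq> 0"
    using form_norm_pos[OF assms(5)] assms(7) by (auto simp: attains_norm_at_def)
  then have "x ` {..<k} \<subseteq> cspan {x 0}"
    using parallel_slots[OF assms(1,6,7), of 0] \<open>0 < k\<close> by (auto simp: cvs.span_singleton)
  moreover have "x 0 \<noteq> 0"
    using assms(6) \<open>0 < k\<close> by auto
  ultimately show ?thesis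
    using \<open>0 < k\<close> by (intro cvs.dim_unique[of "{x 0}"]) auto
qed

end
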